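(* Let $(M,L_M)$, $(N,L_N)$ be Lip-von Neumann algebras. Then the family $\mathcal L(M,N)$ is uniformly $w^*$-equicontinuous on the unit ball: for every $\varepsilon>0$ and every $x_0\in M_1$, $y_0\in N_1$ there is a neighbourhood $U$ of $(x_0,y_0)$ in $M_1\times N_1$ for the (product) $w^*$-topology such that $|L(x,-y)-L(x_0,-y_0)|<\varepsilon$ for all $(x,y)\in U$ and all $L\in\mathcal L(M,N)$.
   Context: A Lip-von Neumann algebra (LvNA) is a pair $(M,L_M)$ where $M$ is a von Neumann algebra and $L_M$ is a norm on $M$ (everywhere finite) inducing the $w^*$-topology on bounded subsets of $M$ (equivalently, the closed unit ball $M_1=\{x\in M:\|x\|\le 1\}$ is compact in the $L_M$-topology). For LvNAs $(M,L_M)$, $(N,L_N)$, $\mathcal L(M,N)$ is the set of seminorms $L$ on $M\oplus N$ with $L(x,0)=L_M(x)$ and $L(0,y)=L_N(y)$ for all $x\in M,y\in N$. *)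

theory Defs
  imports "HOL-Analysis.Analysis"
begin

text \<open>Abstract W*-algebras (Sakai): a unital C*-algebra which is (isometrically) the
dual Banach space of a Banach space of normal functionals (its predual).
The real Banach algebra structure comes from the type class; complex scalar
multiplication sc and the involution st are explicit parameters.\<close>

definition complex_struct :: "(complex \<Rightarrow> 'a::{real_normed_algebra,banach} \<Rightarrow> 'a) \<Rightarrow> bool" where
  "complex_struct sc \<longleftrightarrow>
     (\<forall>r x. sc (complex_of_real r) x = scaleR r x) \<and>
     (\<forall>a b x. sc (a + b) x = sc a x + sc b x) \<and>
     (\<forall>a x y. sc a (x + y) = sc a x + sc a y) \<and>
     (\<forall>a b x. sc a (sc b x) = sc (a * b) x) \<and>
     (\<forall>a x y. sc a (x * y) = sc a x * y \<and> sc a (x * y) = x * sc a y) \<and>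
     (\<forall>a x. norm (sc a x) = cmod a * norm x)"

definition C_star_algebra ::
  "(complex \<Rightarrow> 'a::{real_normed_algebra,banach} \<Rightarrow> 'a) \<Rightarrow> ('a \<Rightarrow> 'a) \<Rightarrow> bool" where
  "C_star_algebra sc st \<longleftrightarrow> complex_struct sc \<and>
     (\<forall>x y. st (x + y) = st x + st y) \<and>
     (\<forall>a x. st (sc a x) = sc (cnj a) (st x)) \<and>
     (\<forall>x. st (st x) = x) \<and>
     (\<forall>x y. st (x * y) = st y * st x) \<and>
     (\<forall>x. norm (st x * x) = (norm x)\<^sup>2)"

definition bounded_clinear_fun ::
  "(complex \<Rightarrow> 'a::{real_normed_algebra,banach} \<Rightarrow> 'a) \<Rightarrow> ('a \<Rightarrow> complex) \<Rightarrow> bool" where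
  "bounded_clinear_fun sc \<phi> \<longleftrightarrow> bounded_linear \<phi> \<and> (\<forall>c x. \<phi> (sc c x) = c * \<phi> x)"

text \<open>P is a predual of the C*-algebra: a norm-closed complex subspace of the
dual such that the canonical map x \<mapsto> (\<phi> \<mapsto> \<phi> x) is an isometric
isomorphism of the algebra onto the Banach dual of P.\<close>
definition is_predual ::
  "(complex \<Rightarrow> 'a::{real_normed_algebra,banach} \<Rightarrow> 'a) \<Rightarrow> ('a \<Rightarrow> complex) set \<Rightarrow> bool" where
  "is_predual sc P \<longleftrightarrow>
     (\<forall>\<phi>\<in>P. bounded_clinear_fun sc \<phi>) \<and>
     (\<lambda>x. 0) \<in> P \<and>
     (\<forall>\<phi>\<in>P. \<forall>\<psi>\<in>P. (\<lambda>x. \<phi> x + \<psi> x) \<in> P) \<and>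
     (\<forall>c. \<forall>\<phi>\<in>P. (\<lambda>x. c * \<phi> x) \<in> P) \<and>
     (\<forall>\<phi>. bounded_clinear_fun sc \<phi> \<and>
          (\<forall>e>0. \<exists>\<psi>\<in>P. onorm (\<lambda>x. \<phi> x - \<psi> x) < e) \<longrightarrow> \<phi> \<in> P) \<and>
     (\<forall>x. norm x = (SUP \<phi>\<in>{\<phi>\<in>P. onorm \<phi> \<le> 1}. cmod (\<phi> x))) \<and>
     (\<forall>f :: ('a \<Rightarrow> complex) \<Rightarrow> complex.
        (\<forall>\<phi>\<in>P. \<forall>\<psi>\<in>P. f (\<lambda>x. \<phi> x + \<psi> x) = f \<phi> + f \<psi>) \<and>
        (\<forall>c. \<forall>\<phi>\<in>P. f (\<lambda>x. c * \<phi> x) = c * f \<phi>) \<and>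
        (\<exists>K. \<forall>\<phi>\<in>P. cmod (f \<phi>) \<le> K * onorm \<phi>)
        \<longrightarrow> (\<exists>x. \<forall>\<phi>\<in>P. f \<phi> = \<phi> x))"

definition von_neumann_algebra ::
  "(complex \<Rightarrow> 'a::{real_normed_algebra,banach} \<Rightarrow> 'a) \<Rightarrow> ('a \<Rightarrow> 'a) \<Rightarrow> ('a \<Rightarrow> complex) set \<Rightarrow> bool" where
  "von_neumann_algebra sc st P \<longleftrightarrow> C_star_algebra sc st \<and>
     (\<exists>e. \<forall>x. e * x = x \<and> x * e = (x::'a)) \<and> is_predual sc P"

definition wstar_topology :: "('a \<Rightarrow> complex) set \<Rightarrow> 'a topology" where
  "wstar_topology P = topology_generated_by {{x. \<phi> x \<in> U} | \<phi> U. \<phi> \<in> P \<and> open U}"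

definition is_cnorm :: "(complex \<Rightarrow> 'a::{real_normed_algebra,banach} \<Rightarrow> 'a) \<Rightarrow> ('a \<Rightarrow> real) \<Rightarrow> bool" where
  "is_cnorm sc L \<longleftrightarrow> (\<forall>x y. L (x + y) \<le> L x + L y) \<and>
     (\<forall>c x. L (sc c x) = cmod c * L x) \<and> (\<forall>x. L x = 0 \<longrightarrow> x = 0)"

definition norm_topology :: "('a::ab_group_add \<Rightarrow> real) \<Rightarrow> 'a topology" where
  "norm_topology L = topology (\<lambda>U. \<forall>x\<in>U. \<exists>e>0. \<forall>y. L (y - x) < e \<longrightarrow> y \<in> U)"

definition unit_ball :: "'a::real_normed_vector set" where
  "unit_ball = {x. norm x \<le> 1}"

definition Lip_vN_algebra ::
  "(complex \<Rightarrow> 'a::{real_normed_algebra,banach} \<Rightarrow> 'a) \<Rightarrow> ('a \<Rightarrow> 'a) \<Rightarrow> ('a \<Rightarrow> complex) set \<Rightarrow> ('a \<Rightarrow> real) \<Rightarrow> bool" where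
  "Lip_vN_algebra sc st P L \<longleftrightarrow> von_neumann_algebra sc st P \<and> is_cnorm sc L \<and>
     (\<forall>B. (\<exists>r. \<forall>x\<in>B. norm x \<le> r) \<longrightarrow>
          subtopology (wstar_topology P) B = subtopology (norm_topology L) B)"

definition Lfam ::
  "(complex \<Rightarrow> 'a::{real_normed_algebra,banach} \<Rightarrow> 'a) \<Rightarrow> (complex \<Rightarrow> 'b::{real_normed_algebra,banach} \<Rightarrow> 'b)
   \<Rightarrow> ('a \<Rightarrow> real) \<Rightarrow> ('b \<Rightarrow> real) \<Rightarrow> ('a \<times> 'b \<Rightarrow> real) set" where
  "Lfam scM scN LM LN = {L.
     (\<forall>z w. L (z + w) \<le> L z + L w) \<and>
     (\<forall>c x y. L (scM c x, scN c y) = cmod c * L (x, y)) \<and>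
     (\<forall>x. L (x, 0) = LM x) \<and> (\<forall>y. L (0, y) = LN y)}"

end

theory Submission
  imports Defs
begin

text \<open>Every L in the family satisfies the triangle inequality and agrees with L_M and L_N on
the summands, so it is 1-Lipschitz for L_M(x - x') + L_N(y - y'), uniformly in L. Since L_M and
L_N induce the w*-topology on the unit balls, their balls there are w*-open, and their product
is the required neighbourhood.\<close>

lemma istopology_norm_topology:
  fixes L :: "'a::ab_group_add \<Rightarrow> real"
  shows "istopology (\<lambda>U. \<forall>x\<in>U. \<exists>e>0. \<forall>y. L (y - x) < e \<longrightarrow> y \<in> U)"
  unfolding istopology_def
proof (intro conjI allI impI)
  fix S T
  assume S: "\<forall>x\<in>S. \<exists>e>0. \<forall>y. L (y - x) < e \<longrightarrow> y \<in> S"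
    and T: "\<forall>x\<in>T. \<exists>e>0. \<forall>y. L (y - x) < e \<longrightarrow> y \<in> T"
  show "\<forall>x\<in>S \<inter> T. \<exists>e>0. \<forall>y. L (y - x) < e \<longrightarrow> y \<in> S \<inter> T"
  proof
    fix x assume "x \<in> S \<inter> T"
    then obtain e1 e2 where "e1 > 0" "\<forall>y. L (y - x) < e1 \<longrightarrow> y \<in> S"
      and "e2 > 0" "\<forall>y. L (y - x) < e2 \<longrightarrow> y \<in> T"
      using S T by blast
    then show "\<exists>e>0. \<forall>y. L (y - x) < e \<longrightarrow> y \<in> S \<inter> T"
      by (intro exI[of _ "min e1 e2"]) auto
  qed
next
  fix K assume "\<forall>S\<in>K. \<forall>x\<in>S. \<exists>e>0. \<forall>y. L (y - x) < e \<longrightarrow> y \<in> S"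
  then show "\<forall>x\<in>\<Union>K. \<exists>e>0. \<forall>y. L (y - x) < e \<longrightarrow> y \<in> \<Union>K"
    by (meson UnionE UnionI)
qed

lemma openin_norm_topology_ball:
  fixes L :: "'a::ab_group_add \<Rightarrow> real"
  assumes triangle: "\<And>u v. L (u + v) \<le> L u + L v"
  shows "openin (norm_topology L) {x. L (x - x0) < r}"
  unfolding norm_topology_def topology_inverse'[OF istopology_norm_topology]
proof
  fix x assume "x \<in> {x. L (x - x0) < r}"
  then have "L (x - x0) < r" by simp
  show "\<exists>e>0. \<forall>y. L (y - x) < e \<longrightarrow> y \<in> {x. L (x - x0) < r}"
  proof (intro exI[of _ "r - L (x - x0)"] conjI allI impI)
    fix y assume "L (y - x) < r - L (x - x0)"
    moreover have "L (y - x0) \<le> L (y - x) + L (x - x0)"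
      using triangle[of "y - x" "x - x0"] by simp
    ultimately show "y \<in> {x. L (x - x0) < r}" by simp
  qed (use \<open>L (x - x0) < r\<close> in simp)
qed

lemma is_cnorm_triangle: "is_cnorm sc L \<Longrightarrow> L (u + v) \<le> L u + L v"
  unfolding is_cnorm_def by blast

lemma complex_struct_zero: "complex_struct sc \<Longrightarrow> sc 0 x = 0"
  unfolding complex_struct_def by (metis of_real_0 scaleR_zero_left)

lemma complex_struct_minus_one: "complex_struct sc \<Longrightarrow> sc (-1) x = - x"
  unfolding complex_struct_def by (metis of_real_1 of_real_minus scaleR_minus1_left)

lemma is_cnorm_zero:
  assumes "complex_struct sc" "is_cnorm sc L"
  shows "L 0 = 0"
  using assms(2) complex_struct_zero[OF assms(1), of 0] unfolding is_cnorm_def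
  by (metis mult_zero_left norm_zero)

lemma is_cnorm_uminus:
  assumes "complex_struct sc" "is_cnorm sc L"
  shows "L (- x) = L x"
  using assms(2) complex_struct_minus_one[OF assms(1), of x] unfolding is_cnorm_def
  by (metis mult_1 norm_minus_cancel norm_one)

lemma Lip_vN_algebra_complex_struct: "Lip_vN_algebra sc st P L \<Longrightarrow> complex_struct sc"
  unfolding Lip_vN_algebra_def von_neumann_algebra_def C_star_algebra_def by blast

lemma Lip_vN_algebra_is_cnorm: "Lip_vN_algebra sc st P L \<Longrightarrow> is_cnorm sc L"
  unfolding Lip_vN_algebra_def by blast

lemma Lip_vN_algebra_unit_ball_topology:
  assumes "Lip_vN_algebra sc st P L"
  shows "subtopology (wstar_topology P) unit_ball = subtopology (norm_topology L) unit_ball"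
proof -
  have "\<forall>x\<in>(unit_ball :: 'a set). norm x \<le> 1"
    by (simp add: unit_ball_def)
  then show ?thesis
    using assms unfolding Lip_vN_algebra_def by blast
qed

lemma openin_wstar_unit_ball_ball:
  assumes "Lip_vN_algebra sc st P L"
  shows "openin (subtopology (wstar_topology P) unit_ball) {x\<in>unit_ball. L (x - x0) < r}"
proof -
  have "openin (norm_topology L) {x. L (x - x0) < r}"
    by (rule openin_norm_topology_ball)
      (rule is_cnorm_triangle[OF Lip_vN_algebra_is_cnorm[OF assms]])
  then show ?thesis
    unfolding Lip_vN_algebra_unit_ball_topology[OF assms] openin_subtopology by blast
qed

lemma Lfam_le_sum:
  assumes "L \<in> Lfam scM scN LM LN"
  shows "L (x, y) \<le> LM x + LN y"
proof -
  have "L (x, y) = L ((x, 0) + (0, y))" by simp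
  also have "\<dots> \<le> L (x, 0) + L (0, y)" using assms unfolding Lfam_def by blast
  also have "\<dots> = LM x + LN y" using assms unfolding Lfam_def by simp
  finally show ?thesis .
qed

lemma Lfam_lipschitz:
  assumes L: "L \<in> Lfam scM scN LM LN"
    and LM_sym: "\<And>u. LM (- u) = LM u" and LN_sym: "\<And>v. LN (- v) = LN v"
  shows "\<bar>L (x, y) - L (x', y')\<bar> \<le> LM (x - x') + LN (y - y')"
proof -
  have triangle: "L (z + w) \<le> L z + L w" for z w
    using L unfolding Lfam_def by blast
  have "L (x, y) \<le> L (x', y') + L (x - x', y - y')"
    using triangle[of "(x', y')" "(x - x', y - y')"] by simp
  moreover have "L (x', y') \<le> L (x, y) + L (- (x - x'), - (y - y'))"
    using triangle[of "(x, y)" "(- (x - x'), - (y - y'))"] by simp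
  ultimately show ?thesis
    using Lfam_le_sum[OF L, of "x - x'" "y - y'"] Lfam_le_sum[OF L, of "- (x - x')" "- (y - y')"]
      LM_sym[of "x - x'"] LN_sym[of "y - y'"] by linarith
qed

theorem mainTheorem6:
  fixes scM :: "complex \<Rightarrow> 'a::{real_normed_algebra,banach} \<Rightarrow> 'a"
    and scN :: "complex \<Rightarrow> 'b::{real_normed_algebra,banach} \<Rightarrow> 'b"
  assumes "Lip_vN_algebra scM stM PM LM"
    and "Lip_vN_algebra scN stN PN LN"
  shows "\<forall>\<epsilon>>0. \<forall>x0\<in>unit_ball. \<forall>y0\<in>unit_ball.
           \<exists>U. openin (prod_topology (subtopology (wstar_topology PM) unit_ball)
                                    (subtopology (wstar_topology PN) unit_ball)) U
               \<and> (x0, y0) \<in> U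
               \<and> (\<forall>(x, y)\<in>U. \<forall>L\<in>Lfam scM scN LM LN.
                     \<bar>L (x, - y) - L (x0, - y0)\<bar> < \<epsilon>)"
proof (intro allI impI ballI)
  fix \<epsilon> :: real and x0 :: 'a and y0 :: 'b
  assume "\<epsilon> > 0" "x0 \<in> unit_ball" "y0 \<in> unit_ball"
  note cs = Lip_vN_algebra_complex_struct[OF assms(1)] Lip_vN_algebra_complex_struct[OF assms(2)]
  note cn = Lip_vN_algebra_is_cnorm[OF assms(1)] Lip_vN_algebra_is_cnorm[OF assms(2)]
  define A where "A = {x\<in>unit_ball. LM (x - x0) < \<epsilon>/2}"
  define B where "B = {y\<in>unit_ball. LN (y - y0) < \<epsilon>/2}"
  have "openin (prod_topology (subtopology (wstar_topology PM) unit_ball)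
                              (subtopology (wstar_topology PN) unit_ball)) (A \<times> B)"
    unfolding openin_prod_Times_iff A_def B_def
    using openin_wstar_unit_ball_ball[OF assms(1), of x0 "\<epsilon>/2"]
      openin_wstar_unit_ball_ball[OF assms(2), of y0 "\<epsilon>/2"] by (intro disjI2 conjI)
  moreover have "(x0, y0) \<in> A \<times> B"
    using \<open>\<epsilon> > 0\<close> \<open>x0 \<in> unit_ball\<close> \<open>y0 \<in> unit_ball\<close> is_cnorm_zero[OF cs(1) cn(1)]
      is_cnorm_zero[OF cs(2) cn(2)]
    unfolding A_def B_def by simp
  moreover have "\<forall>(x, y)\<in>A \<times> B. \<forall>L\<in>Lfam scM scN LM LN. \<bar>L (x, - y) - L (x0, - y0)\<bar> < \<epsilon>"
  proof clarify
    fix x y L assume "x \<in> A" "y \<in> B" "L \<in> Lfam scM scN LM LN"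
    have "\<bar>L (x, - y) - L (x0, - y0)\<bar> \<le> LM (x - x0) + LN (- y - - y0)"
      using Lfam_lipschitz[OF \<open>L \<in> _\<close> is_cnorm_uminus[OF cs(1) cn(1)] is_cnorm_uminus[OF cs(2) cn(2)]] .
    also have "LN (- y - - y0) = LN (y - y0)"
      using is_cnorm_uminus[OF cs(2) cn(2), of "y - y0"] by simp
    finally show "\<bar>L (x, - y) - L (x0, - y0)\<bar> < \<epsilon>"
      using \<open>x \<in> A\<close> \<open>y \<in> B\<close> unfolding A_def B_def by simp
  qed
  ultimately show "\<exists>U. openin (prod_topology (subtopology (wstar_topology PM) unit_ball)
                                    (subtopology (wstar_topology PN) unit_ball)) U
               \<and> (x0, y0) \<in> U
               \<and> (\<forall>(x, y)\<in>U. \<forall>L\<in>Lfam scM scN LM LN. \<bar>L (x, - y) - L (x0, - y0)\<bar> < \<epsilon>)"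
    by (intro exI[of _ "A \<times> B"] conjI)
qed

end
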